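(* Assume $B$ is connected and let $n\ge1$. For a $\mathbb{K}$-linear map $\varphi\colon A\to B$ the following are equivalent: (i) for every $a\in A$, $R_\varphi(a,z)$ is a polynomial in $z$ of degree at most $n$, and it has degree exactly $n$ for some $a\in A$; (ii) $\varphi$ is a Frobenius $n$-homomorphism.
   Context: $\mathbb{K}=\mathbb{R}$ or $\mathbb{C}$; $A$ and $B$ are commutative associative unital $\mathbb{K}$-algebras. For a $\mathbb{K}$-linear map $\varphi\colon A\to B$ and $a\in A$, the characteristic function is $R_\varphi(a,z)=\exp\bigl(\varphi(\ln(1+az))\bigr)=1+\sum_{k\ge1}\psi_k(a)z^k\in B[[z]]$, with $\ln(1+az)=\sum_{k\ge1}(-1)^{k+1}a^kz^k/k$ and $\varphi$ applied coefficientwise. The Frobenius maps $\Phi_k\colon A^k\to B$ of $\varphi$ are defined by $\Phi_1=\varphi$ and $\Phi_{k+1}(a_1,\dots,a_{k+1})=\varphi(a_1)\Phi_k(a_2,\dots,a_{k+1})-\sum_{j=2}^{k+1}\Phi_k(a_2,\dots,a_{j-1},a_1a_j,a_{j+1},\dots,a_{k+1})$. A linear map $\varphi$ is a (Frobenius) $n$-homomorphism if $\varphi(1)=n\cdot1_B$ and $\Phi_k\equiv0$ for all $k\ge n+1$. The algebra $B$ is connected if for every $b\in B$ and $k\ge0$, $b(b-1)\cdots(b-k)=0$ implies $b=j\cdot1_B$ for some $j\in\{0,\dots,k\}$. *)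

theory Defs
  imports Complex_Main "HOL-Computational_Algebra.Formal_Power_Series"
    "HOL-Computational_Algebra.Polynomial_FPS"
begin

text \<open>Algebras over the reals: commutative unital rings that are real algebras.
  (A complex algebra is in particular a real algebra and complex-linear maps are
  real-linear, so the real case covers both choices of the scalar field.)\<close>

text \<open>The formal logarithm series: ln(1 + a z) = sum_{k>=1} (-1)^(k+1) a^k z^k / k,
  with phi applied coefficientwise.\<close>
definition phi_ln_series :: "('a::{comm_ring_1,real_algebra_1} \<Rightarrow> 'b::{comm_ring_1,real_algebra_1}) \<Rightarrow> 'a \<Rightarrow> 'b fps" where
  "phi_ln_series \<phi> a =
     Abs_fps (\<lambda>k. if k = 0 then 0
                   else \<phi> (scaleR ((-1) ^ (k + 1) / real k) (a ^ k)))"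

text \<open>Formal exponential of a power series with vanishing constant term:
  exp f = sum_m f^m / m!  (the coefficient of z^k only involves m <= k).\<close>
definition fps_exp_series :: "'b::{comm_ring_1,real_algebra_1} fps \<Rightarrow> 'b fps" where
  "fps_exp_series f = Abs_fps (\<lambda>k. \<Sum>m\<le>k. scaleR (1 / fact m) (fps_nth (f ^ m) k))"

definition char_fun :: "('a::{comm_ring_1,real_algebra_1} \<Rightarrow> 'b::{comm_ring_1,real_algebra_1}) \<Rightarrow> 'a \<Rightarrow> 'b fps" where
  "char_fun \<phi> a = fps_exp_series (phi_ln_series \<phi> a)"

text \<open>Frobenius maps: frob phi [a1,...,ak] = Phi_k(a1,...,ak) (for k >= 1);
  the empty list gets the value 1 (unused by the definitions).\<close>
function frob :: "('a::comm_ring_1 \<Rightarrow> 'b::comm_ring_1) \<Rightarrow> 'a list \<Rightarrow> 'b" where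
  "frob \<phi> [] = 1"
| "frob \<phi> [a] = \<phi> a"
| "frob \<phi> (a # b # as) =
     \<phi> a * frob \<phi> (b # as)
     - (\<Sum>j<length (b # as). frob \<phi> ((b # as)[j := a * (b # as) ! j]))"
  by pat_completeness auto
termination
  by (relation "measure (\<lambda>(f, xs). length xs)") (auto split: nat.split)

definition frobenius_hom :: "nat \<Rightarrow> ('a::comm_ring_1 \<Rightarrow> 'b::comm_ring_1) \<Rightarrow> bool" where
  "frobenius_hom n \<phi> \<longleftrightarrow>
     \<phi> 1 = of_nat n \<and> (\<forall>xs. length xs \<ge> n + 1 \<longrightarrow> frob \<phi> xs = 0)"

definition connected_alg :: "'b::comm_ring_1 itself \<Rightarrow> bool" where
  "connected_alg _ \<longleftrightarrow>
     (\<forall>(b::'b) (k::nat). (\<Prod>i\<le>k. b - of_nat i) = 0 \<longrightarrow> (\<exists>j\<le>k. b = of_nat j))"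

end

theory Submission
  imports Defs
begin

(* Write psi_k(a) for the k-th coefficient of R_phi(a,z) and Phi_k for the Frobenius maps.
   The proof rests on two bridges between them:

   (1) k! psi_k(a) = Phi_k(a,...,a).  Differentiating R = exp(phi(ln(1+az))) gives the
       recursion (k+1) psi_(k+1)(a) = sum_j (-1)^j phi(a^(j+1)) psi_(k-j)(a), and unfolding the
       defining recursion of Phi on the list (a, a, ..., a) yields the same recursion.
   (2) Polarization: Phi_k is symmetric and additive and R-homogeneous in each argument, so
       Phi_k vanishes identically as soon as it vanishes on the diagonal (a,...,a).

   Together they show that R_phi(a,z) has degree <= n for all a iff Phi_k = 0 for all k > n.
   The remaining normalisation phi(1) = n comes from Phi_k(1,...,1) = prod_(i<k) (phi(1) - i):
   connectedness of B forces phi(1) = j for some j <= n, and the relation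
   (phi(1) - n) psi_n(a) = Phi_(n+1)(1,a,...,a) = 0 shows that j = n exactly when some
   R_phi(a,z) has degree n. *)

unbundle fps_syntax

lemma of_real_mult_eq_0_cancel:
  fixes z :: "'b::real_algebra_1"
  assumes "of_real r * z = 0" and "r \<noteq> 0"
  shows "z = 0"
proof -
  have "r *\<^sub>R z = 0" using assms(1) by (simp add: scaleR_conv_of_real)
  then show ?thesis using assms(2) by simp
qed

lemma of_nat_mult_eq_0_cancel:
  fixes z :: "'b::real_algebra_1"
  assumes "of_nat n * z = 0" and "n \<noteq> 0"
  shows "z = 0"
  using of_real_mult_eq_0_cancel[of "real n" z] assms by simp


section \<open>Symmetry of the Frobenius maps\<close>

(* The defining recursion, uniformly for all tails (including the empty one). *)
lemma frob_Cons:
  "frob \<phi> (a # r) = \<phi> a * frob \<phi> r - (\<Sum>j<length r. frob \<phi> (r[j := a * r ! j]))"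
  by (cases r) simp_all

lemma double_scale_update_commute:
  fixes r :: "'a::comm_ring_1 list"
  assumes "j < length r" "l < length r"
  shows "(r[j := a * r ! j])[l := b * (r[j := a * r ! j]) ! l]
       = (r[l := b * r ! l])[j := a * (r[l := b * r ! l]) ! j]"
  using assms by (cases "j = l") (simp_all add: mult.left_commute list_update_swap)

(* Expanding the recursion twice shows that the first two arguments may be swapped:
   the expansion is symmetric in a and b. *)
lemma frob_swap_head: "frob \<phi> (a # b # r) = frob \<phi> (b # a # r)"
proof -
  define n where "n = length r"
  define D where "D a b = (\<Sum>j<n. \<Sum>l<n. frob \<phi> ((r[j := a * r ! j])[l := b * (r[j := a * r ! j]) ! l]))"
    for a b
  have D_sym: "D a b = D b a"
    unfolding D_def n_def
    by (subst sum.swap) (intro sum.cong refl, simp add: double_scale_update_commute)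
  have expand: "frob \<phi> (a # b # r)
      = \<phi> a * (\<phi> b * frob \<phi> r - (\<Sum>l<n. frob \<phi> (r[l := b * r ! l])))
        - (\<phi> (a * b) * frob \<phi> r - (\<Sum>l<n. frob \<phi> (r[l := (a * b) * r ! l])))
        - (\<phi> b * (\<Sum>j<n. frob \<phi> (r[j := a * r ! j])) - D a b)" for a b
  proof -
    have "(\<Sum>j<length (b # r). frob \<phi> ((b # r)[j := a * (b # r) ! j]))
        = frob \<phi> (a * b # r) + (\<Sum>j<n. frob \<phi> (b # r[j := a * r ! j]))"
      by (simp only: length_Cons sum.lessThan_Suc_shift n_def) simp
    then have "frob \<phi> (a # b # r)
        = \<phi> a * frob \<phi> (b # r) - (frob \<phi> (a * b # r) + (\<Sum>j<n. frob \<phi> (b # r[j := a * r ! j])))"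
      by (simp only: frob_Cons[of \<phi> a "b # r"])
    also have "(\<Sum>j<n. frob \<phi> (b # r[j := a * r ! j]))
        = \<phi> b * (\<Sum>j<n. frob \<phi> (r[j := a * r ! j])) - D a b"
      by (simp add: frob_Cons[of \<phi> b] D_def n_def sum_distrib_left sum_subtractf del: frob.simps)
    finally show ?thesis by (simp add: frob_Cons n_def del: frob.simps)
  qed
  show ?thesis unfolding expand[of a b] expand[of b a] D_sym by (simp add: algebra_simps)
qed

(* By induction on the length, equal tails give equal values (the recursion only sees the
   multiset of the tail), and a mismatch of heads is repaired by one swap. *)
lemma frob_mset_eq: "mset xs = mset ys \<Longrightarrow> frob \<phi> xs = frob \<phi> ys"
proof (induction "length xs" arbitrary: xs ys rule: less_induct)
  case less
  have same_head: "frob \<phi> (c # r) = frob \<phi> (c # r')"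
    if len: "length r < length xs" and mr: "mset r = mset r'" for c r r'
  proof -
    have lr: "length r' = length r" using mr by (metis size_mset)
    define f where "f rr x = frob \<phi> (c * x # remove1 x rr)" for rr x
    have sum_as_mset: "(\<Sum>j<length rr. frob \<phi> (rr[j := c * rr ! j])) = sum_mset (image_mset (f rr) (mset rr))"
      if "length rr = length r" for rr
    proof -
      have "(\<Sum>j<length rr. frob \<phi> (rr[j := c * rr ! j])) = (\<Sum>j<length rr. f rr (rr ! j))"
      proof (rule sum.cong[OF refl])
        fix j assume j: "j \<in> {..<length rr}"
        have "mset (rr[j := c * rr ! j]) = mset (c * rr ! j # remove1 (rr ! j) rr)"
          using j by (simp add: mset_update)
        then show "frob \<phi> (rr[j := c * rr ! j]) = f rr (rr ! j)"
          unfolding f_def using less.hyps[of "rr[j := c * rr ! j]"] len that by simp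
      qed
      also have "\<dots> = sum_list (map (f rr) rr)"
        by (simp add: sum_list_sum_nth atLeast0LessThan)
      also have "\<dots> = sum_mset (image_mset (f rr) (mset rr))"
        by (metis mset_map sum_mset_sum_list)
      finally show ?thesis .
    qed
    have "image_mset (f r) (mset r) = image_mset (f r') (mset r)"
    proof (rule image_mset_cong)
      fix x assume "x \<in># mset r"
      then have "length (c * x # remove1 x r) = length r"
        by (simp add: length_remove1) (metis Suc_pred length_pos_if_in_set)
      then show "f r x = f r' x" unfolding f_def
        using less.hyps[of "c * x # remove1 x r" "c * x # remove1 x r'"] len mr
        by simp
    qed
    moreover have "frob \<phi> r = frob \<phi> r'" using less.hyps[of r r'] len mr by simp
    ultimately show ?thesis
      unfolding frob_Cons[of \<phi> c r] frob_Cons[of \<phi> c r'] sum_as_mset[OF refl] sum_as_mset[OF lr]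
        mr[symmetric] by simp
  qed
  show ?case
  proof (cases xs)
    case Nil then show ?thesis using less.prems by simp
  next
    case (Cons a r)
    then obtain b s where ys: "ys = b # s"
      using less.prems by (cases ys) auto
    show ?thesis
    proof (cases "a = b")
      case True
      then show ?thesis using same_head[of r s a] less.prems Cons ys by (simp del: frob.simps)
    next
      case False
      then have "a \<in> set s" using less.prems Cons ys
        by (metis list.set_intros(1) mset_eq_setD set_ConsD)
      then obtain s1 s2 where s: "s = s1 @ a # s2" by (meson split_list)
      have ms: "mset r = mset (b # s1 @ s2)" using less.prems Cons ys s by simp
      have "length ys = length xs" using less.prems by (metis size_mset)
      then have "frob \<phi> ys = frob \<phi> (b # a # s1 @ s2)"
        using same_head[of "s1 @ a # s2" "a # s1 @ s2" b] ys s Cons by (simp del: frob.simps)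
      also have "\<dots> = frob \<phi> (a # b # s1 @ s2)" by (rule frob_swap_head)
      also have "\<dots> = frob \<phi> xs"
      proof -
        have "length (b # s1 @ s2) = length r" using ms by (metis size_mset)
        then show ?thesis using same_head[of "b # s1 @ s2" r a] ms Cons by (simp del: frob.simps)
      qed
      finally show ?thesis by simp
    qed
  qed
qed

lemma frob_update_to_head:
  "i < length r \<Longrightarrow> frob \<phi> (r[i := v]) = frob \<phi> (v # take i r @ drop (Suc i) r)"
  by (rule frob_mset_eq) (simp add: upd_conv_take_nth_drop)

lemma frob_replicate_update:
  "j < Suc k \<Longrightarrow> frob \<phi> ((replicate (Suc k) a)[j := v]) = frob \<phi> (v # replicate k a)"
  by (rule frob_mset_eq) (simp add: mset_update del: replicate.simps)


section \<open>Multilinearity\<close>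

lemma frob_linear_head:
  fixes \<phi> :: "'a::{comm_ring_1,real_algebra_1} \<Rightarrow> 'b::{comm_ring_1,real_algebra_1}"
  assumes lin: "linear \<phi>"
  shows "frob \<phi> ((x + y) # r) = frob \<phi> (x # r) + frob \<phi> (y # r)
    \<and> frob \<phi> ((c *\<^sub>R x) # r) = c *\<^sub>R frob \<phi> (x # r)"
proof (induction "length r" arbitrary: r x y c rule: less_induct)
  case less
  define d where "d j = take j r @ drop (Suc j) r" for j
  have shorter: "j < length r \<Longrightarrow> length (d j) < length r" for j unfolding d_def by simp
  have add: "frob \<phi> (r[j := (x + y) * r ! j]) = frob \<phi> (r[j := x * r ! j]) + frob \<phi> (r[j := y * r ! j])"
    if "j < length r" for j
    using that less.hyps[OF shorter[OF that], of "x * r ! j" "y * r ! j"]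
    by (simp add: frob_update_to_head d_def distrib_right del: frob.simps)
  have scale: "frob \<phi> (r[j := (c *\<^sub>R x) * r ! j]) = c *\<^sub>R frob \<phi> (r[j := x * r ! j])"
    if "j < length r" for j
    using that less.hyps[OF shorter[OF that], of "x * r ! j" _ c]
    by (simp add: frob_update_to_head d_def del: frob.simps)
  show ?case
  proof
    show "frob \<phi> ((x + y) # r) = frob \<phi> (x # r) + frob \<phi> (y # r)"
      unfolding frob_Cons[of \<phi> _ r] using add
      by (simp add: real_vector.linear_add[OF lin] distrib_right sum.distrib del: frob.simps)
    show "frob \<phi> ((c *\<^sub>R x) # r) = c *\<^sub>R frob \<phi> (x # r)"
      unfolding frob_Cons[of \<phi> _ r] using scale
      by (simp add: linear_cmul[OF lin] scaleR_right_diff_distrib scaleR_sum_right del: frob.simps)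
  qed
qed


section \<open>Polarization\<close>

(* A polynomial over a real algebra vanishing at infinitely many real points is zero
   (B may have zero divisors, but differences of distinct reals are invertible). *)
lemma poly_eq_0_on_infinite_reals:
  fixes p :: "'b::{comm_ring_1,real_algebra_1} poly"
  assumes "infinite T" and "\<forall>t\<in>T. poly p (of_real t) = 0"
  shows "p = 0"
  using assms
proof (induction "degree p" arbitrary: p T rule: less_induct)
  case less
  obtain t0 where t0: "t0 \<in> T" using less.prems(1) by (metis all_not_in_conv finite.emptyI)
  show ?case
  proof (cases "degree p = 0")
    case True
    then obtain c where "p = [:c:]" by (meson degree_eq_zeroE)
    then show ?thesis using less.prems(2) t0 by auto
  next
    case False
    define q where "q = synthetic_div p (of_real t0)"
    have pq: "p = [:- of_real t0, 1:] * q"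
      using synthetic_div_correct'[of "of_real t0" p] less.prems(2) t0 unfolding q_def by simp
    have "\<forall>t\<in>T - {t0}. poly q (of_real t) = 0"
    proof
      fix t assume t: "t \<in> T - {t0}"
      have "of_real (t - t0) * poly q (of_real t) = 0"
        using less.prems(2) t by (subst (asm) pq) (simp add: algebra_simps)
      then show "poly q (of_real t) = 0"
        using t of_real_mult_eq_0_cancel[of "t - t0" "poly q (of_real t)"] by simp
    qed
    moreover have "infinite (T - {t0})" using less.prems(1) by simp
    moreover have "degree q < degree p" using False unfolding q_def degree_synthetic_div by simp
    ultimately have "q = 0" by (intro less.hyps[of q "T - {t0}"])
    then show ?thesis using pq by simp
  qed
qed

lemma frob_perturbation_poly:
  fixes \<phi> :: "'a::{comm_ring_1,real_algebra_1} \<Rightarrow> 'b::{comm_ring_1,real_algebra_1}"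
  assumes lin: "linear \<phi>"
  shows "\<exists>P. (\<forall>t. frob \<phi> (ys @ replicate p (x + t *\<^sub>R y)) = poly P (of_real t))
    \<and> coeff P 0 = frob \<phi> (ys @ replicate p x)
    \<and> coeff P 1 = of_nat p * frob \<phi> (ys @ y # replicate (p - 1) x)"
proof (induction p arbitrary: ys)
  case 0
  show ?case by (rule exI[of _ "[:frob \<phi> ys:]"]) simp
next
  case (Suc p)
  have to_head: "frob \<phi> ((ys @ [v]) @ R) = frob \<phi> (v # ys @ R)" for v R
    by (rule frob_mset_eq) simp
  obtain P1 where P1: "\<forall>t. frob \<phi> (x # ys @ replicate p (x + t *\<^sub>R y)) = poly P1 (of_real t)"
    "coeff P1 0 = frob \<phi> ((ys @ [x]) @ replicate p x)"
    "coeff P1 1 = of_nat p * frob \<phi> ((ys @ [x]) @ y # replicate (p - 1) x)"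
    using Suc.IH[of "ys @ [x]"] unfolding to_head by blast
  obtain P2 where P2: "\<forall>t. frob \<phi> (y # ys @ replicate p (x + t *\<^sub>R y)) = poly P2 (of_real t)"
    "coeff P2 0 = frob \<phi> ((ys @ [y]) @ replicate p x)"
    using Suc.IH[of "ys @ [y]"] unfolding to_head by blast
  have split_last: "frob \<phi> (ys @ replicate (Suc p) v) = frob \<phi> (v # ys @ replicate p v)" for v
    by (rule frob_mset_eq) simp
  show ?case
  proof (intro exI[of _ "P1 + pCons 0 P2"] conjI allI)
    fix t
    have "frob \<phi> (ys @ replicate (Suc p) (x + t *\<^sub>R y))
        = frob \<phi> (x # ys @ replicate p (x + t *\<^sub>R y)) + t *\<^sub>R frob \<phi> (y # ys @ replicate p (x + t *\<^sub>R y))"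
      unfolding split_last using frob_linear_head[OF lin] by (simp del: frob.simps)
    then show "frob \<phi> (ys @ replicate (Suc p) (x + t *\<^sub>R y)) = poly (P1 + pCons 0 P2) (of_real t)"
      using P1(1) P2(1) by (simp add: scaleR_conv_of_real del: frob.simps)
  next
    show "coeff (P1 + pCons 0 P2) 0 = frob \<phi> (ys @ replicate (Suc p) x)"
      using P1(2) by (simp add: split_last to_head del: frob.simps)
  next
    have "frob \<phi> ((ys @ [x]) @ y # replicate (p - 1) x) = frob \<phi> (ys @ y # replicate p x)" if "p \<noteq> 0"
      by (rule frob_mset_eq) (use that in \<open>cases p, auto\<close>)
    then show "coeff (P1 + pCons 0 P2) 1 = of_nat (Suc p) * frob \<phi> (ys @ y # replicate (Suc p - 1) x)"
      using P1(3) P2(2) by (cases "p = 0") (auto simp: coeff_pCons algebra_simps)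
  qed
qed

(* By induction
   on m, Phi_k vanishes on every list ys @ [x,...,x] with length ys = m: the linear term of
   the perturbation polynomial of the previous stage must vanish. *)
lemma frob_polarization:
  fixes \<phi> :: "'a::{comm_ring_1,real_algebra_1} \<Rightarrow> 'b::{comm_ring_1,real_algebra_1}"
  assumes lin: "linear \<phi>" and diag: "\<And>x. frob \<phi> (replicate k x) = 0"
    and len: "length xs = k"
  shows "frob \<phi> xs = 0"
proof -
  have "\<forall>ys x. length ys = m \<longrightarrow> frob \<phi> (ys @ replicate (k - m) x) = 0" if "m \<le> k" for m
    using that
  proof (induction m)
    case 0 then show ?case using diag by simp
  next
    case (Suc m)
    show ?case
    proof (intro allI impI)
      fix ys :: "'a list" and x assume "length ys = Suc m"
      then obtain zs y where ys: "ys = zs @ [y]" and lz: "length zs = m"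
        by (metis length_Suc_conv_rev)
      obtain P where P: "\<forall>t. frob \<phi> (zs @ replicate (k - m) (x + t *\<^sub>R y)) = poly P (of_real t)"
        "coeff P 1 = of_nat (k - m) * frob \<phi> (zs @ y # replicate (k - m - 1) x)"
        using frob_perturbation_poly[OF lin, of zs "k - m" x y] by blast
      have IH: "\<forall>ys x. length ys = m \<longrightarrow> frob \<phi> (ys @ replicate (k - m) x) = 0"
        using Suc.IH Suc.prems by simp
      have "\<forall>t\<in>UNIV. poly P (of_real t) = 0"
        using IH lz P(1) by (metis (no_types))
      then have "P = 0" by (intro poly_eq_0_on_infinite_reals[of UNIV]) (simp_all add: infinite_UNIV_char_0)
      then have "of_nat (k - m) * frob \<phi> (zs @ y # replicate (k - m - 1) x) = 0" using P(2) by simp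
      then have "frob \<phi> (zs @ y # replicate (k - m - 1) x) = 0"
        by (rule of_nat_mult_eq_0_cancel) (use Suc.prems in simp)
      moreover have "ys @ replicate (k - Suc m) x = zs @ y # replicate (k - m - 1) x" using ys by simp
      ultimately show "frob \<phi> (ys @ replicate (k - Suc m) x) = 0" by (simp only:)
    qed
  qed
  from this[of k] show ?thesis using len by (simp del: frob.simps)
qed


section \<open>Frobenius maps on repeated arguments\<close>

lemma frob_one_Cons: "frob \<phi> (1 # r) = (\<phi> 1 - of_nat (length r)) * frob \<phi> r"
  by (simp add: frob_Cons[of \<phi> 1 r] algebra_simps del: frob.simps)

lemma frob_replicate_one: "frob \<phi> (replicate k 1) = (\<Prod>i<k. \<phi> 1 - of_nat i)"
proof (induction k)
  case (Suc k)
  then show ?case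
    by (simp only: replicate_Suc frob_one_Cons length_replicate prod.lessThan_Suc) (simp add: mult.commute)
qed simp

definition falling_fact :: "nat \<Rightarrow> nat \<Rightarrow> nat" where
  "falling_fact j k = (\<Prod>i<j. k - i)"

lemma falling_fact_Suc: "falling_fact (Suc j) (Suc k) = Suc k * falling_fact j k"
  unfolding falling_fact_def prod.lessThan_Suc_shift by simp

lemma fact_eq_falling_fact: "j \<le> k \<Longrightarrow> fact k = falling_fact j k * fact (k - j)"
proof (induction j arbitrary: k)
  case 0 then show ?case by (simp add: falling_fact_def)
next
  case (Suc j)
  then obtain k' where "k = Suc k'" by (cases k) auto
  then show ?case using Suc.IH[of k'] Suc.prems by (simp add: falling_fact_Suc algebra_simps)
qed

(* Iterating the recursion on (b, a, ..., a) peels off one power of a at a time. *)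
lemma frob_Cons_replicate:
  "frob \<phi> (b # replicate k a) =
     (\<Sum>j\<le>k. (-1) ^ j * of_nat (falling_fact j k) * \<phi> (b * a ^ j) * frob \<phi> (replicate (k - j) a))"
proof (induction k arbitrary: b)
  case 0 then show ?case by (simp add: falling_fact_def)
next
  case (Suc k)
  have "(\<Sum>j<length (replicate (Suc k) a). frob \<phi> ((replicate (Suc k) a)[j := b * replicate (Suc k) a ! j]))
      = (\<Sum>j<Suc k. frob \<phi> (b * a # replicate k a))"
    by (rule sum.cong) (auto simp: frob_replicate_update simp del: frob.simps replicate.simps)
  then have "frob \<phi> (b # replicate (Suc k) a)
      = \<phi> b * frob \<phi> (replicate (Suc k) a) - of_nat (Suc k) * frob \<phi> (b * a # replicate k a)"
    by (simp only: frob_Cons[of \<phi> b]) (simp del: frob.simps replicate.simps)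
  also have "\<dots> = (\<Sum>j\<le>Suc k. (-1) ^ j * of_nat (falling_fact j (Suc k)) * \<phi> (b * a ^ j)
                      * frob \<phi> (replicate (Suc k - j) a))"
    unfolding Suc.IH sum.atMost_Suc_shift
    by (simp add: falling_fact_Suc sum_distrib_left falling_fact_def[of 0] algebra_simps
        sum.distrib[symmetric] del: frob.simps replicate.simps)
  finally show ?case .
qed


section \<open>The characteristic function\<close>

lemma fps_exp_series_nth_extend:
  fixes f :: "'b::{comm_ring_1,real_algebra_1} fps"
  assumes "f $ 0 = 0" and "n \<le> N"
  shows "fps_exp_series f $ n = (\<Sum>m\<le>N. scaleR (1 / fact m) ((f ^ m) $ n))"
  unfolding fps_exp_series_def fps_nth_Abs_fps
  by (rule sum.mono_neutral_left) (use assms startsby_zero_power_prefix[OF assms(1)] in auto)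

lemma fps_exp_series_deriv:
  fixes f :: "'b::{comm_ring_1,real_algebra_1} fps"
  assumes f0: "f $ 0 = 0"
  shows "of_nat (Suc k) * fps_exp_series f $ Suc k = (fps_deriv f * fps_exp_series f) $ k"
proof -
  have "of_nat (Suc k) * fps_exp_series f $ Suc k
      = (\<Sum>m\<le>Suc k. scaleR (1 / fact m) (of_nat (Suc k) * (f ^ m) $ Suc k))"
    unfolding fps_exp_series_def fps_nth_Abs_fps sum_distrib_left mult_scaleR_right ..
  also have "\<dots> = (\<Sum>m\<le>Suc k. scaleR (1 / fact m) ((of_nat m * (fps_deriv f * f ^ (m - 1))) $ k))"
  proof (rule sum.cong[OF refl])
    fix m
    have "of_nat (Suc k) * (f ^ m) $ Suc k = fps_deriv (f ^ m) $ k" by simp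
    then show "scaleR (1 / fact m) (of_nat (Suc k) * (f ^ m) $ Suc k)
        = scaleR (1 / fact m) ((of_nat m * (fps_deriv f * f ^ (m - 1))) $ k)"
      by (simp only: fps_deriv_power' mult.assoc)
  qed
  also have "\<dots> = (\<Sum>m\<le>k. scaleR (1 / fact m) ((fps_deriv f * f ^ m) $ k))"
  proof -
    have shift: "scaleR (1 / fact (Suc m)) ((of_nat (Suc m) * g) $ k) = scaleR (1 / fact m) (g $ k)"
      for m and g :: "'b fps"
    proof -
      have "(of_nat (Suc m) * g) $ k = real (Suc m) *\<^sub>R (g $ k)"
        by (simp add: fps_of_nat scaleR_conv_of_real del: of_nat_Suc)
      then show ?thesis by (simp del: of_nat_Suc)
    qed
    show ?thesis unfolding sum.atMost_Suc_shift by (simp only: shift) simp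
  qed
  also have "\<dots> = (\<Sum>j=0..k. fps_deriv f $ j * (\<Sum>m\<le>k. scaleR (1 / fact m) ((f ^ m) $ (k - j))))"
    by (simp add: fps_mult_nth sum_distrib_left scaleR_sum_right sum.swap[of _ "{0..k}"])
  also have "\<dots> = (fps_deriv f * fps_exp_series f) $ k"
    unfolding fps_mult_nth by (intro sum.cong refl) (simp add: fps_exp_series_nth_extend[OF f0, of _ k])
  finally show ?thesis .
qed

lemma phi_ln_series_deriv:
  fixes \<phi> :: "'a::{comm_ring_1,real_algebra_1} \<Rightarrow> 'b::{comm_ring_1,real_algebra_1}"
  assumes lin: "linear \<phi>"
  shows "fps_deriv (phi_ln_series \<phi> a) $ j = (-1) ^ j * \<phi> (a ^ Suc j)"
proof -
  have "fps_deriv (phi_ln_series \<phi> a) $ j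
      = of_nat (Suc j) * (((-1) ^ (j + 2) / real (Suc j)) *\<^sub>R \<phi> (a ^ Suc j))"
    by (simp add: phi_ln_series_def linear_cmul[OF lin])
  also have "\<dots> = of_real (real (Suc j) * ((-1) ^ (j + 2) / real (Suc j))) * \<phi> (a ^ Suc j)"
    by (simp only: scaleR_conv_of_real of_real_mult of_real_of_nat_eq mult.assoc)
  also have "\<dots> = (-1) ^ j * \<phi> (a ^ Suc j)" by simp
  finally show ?thesis .
qed

lemma char_fun_recursion:
  fixes \<phi> :: "'a::{comm_ring_1,real_algebra_1} \<Rightarrow> 'b::{comm_ring_1,real_algebra_1}"
  assumes lin: "linear \<phi>"
  shows "of_nat (Suc k) * char_fun \<phi> a $ Suc k
       = (\<Sum>j\<le>k. (-1) ^ j * \<phi> (a ^ Suc j) * char_fun \<phi> a $ (k - j))"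
proof -
  have ln0: "phi_ln_series \<phi> a $ 0 = 0" by (simp add: phi_ln_series_def)
  show ?thesis
    unfolding char_fun_def fps_exp_series_deriv[OF ln0] fps_mult_nth phi_ln_series_deriv[OF lin]
    by (simp add: atLeast0AtMost)
qed

(* Bridge (1): k! psi_k(a) = Phi_k(a,...,a); both sides satisfy the same recursion. *)
lemma char_fun_coeff_frob:
  fixes \<phi> :: "'a::{comm_ring_1,real_algebra_1} \<Rightarrow> 'b::{comm_ring_1,real_algebra_1}"
  assumes lin: "linear \<phi>"
  shows "of_nat (fact k) * char_fun \<phi> a $ k = frob \<phi> (replicate k a)"
proof (induction k rule: less_induct)
  case (less k)
  show ?case
  proof (cases k)
    case 0 then show ?thesis by (simp add: char_fun_def fps_exp_series_def)
  next
    case (Suc k')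
    have "of_nat (fact k) * char_fun \<phi> a $ k = of_nat (fact k') * (of_nat (Suc k') * char_fun \<phi> a $ Suc k')"
      by (simp add: Suc algebra_simps)
    also have "\<dots> = (\<Sum>j\<le>k'. (-1) ^ j * of_nat (falling_fact j k') * \<phi> (a * a ^ j)
                       * (of_nat (fact (k' - j)) * char_fun \<phi> a $ (k' - j)))"
      unfolding char_fun_recursion[OF lin] sum_distrib_left
    proof (rule sum.cong[OF refl])
      fix j assume "j \<in> {..k'}"
      then have "fact k' = falling_fact j k' * fact (k' - j)" by (intro fact_eq_falling_fact) simp
      then show "of_nat (fact k') * ((-1) ^ j * \<phi> (a ^ Suc j) * char_fun \<phi> a $ (k' - j))
          = (-1) ^ j * of_nat (falling_fact j k') * \<phi> (a * a ^ j)
            * (of_nat (fact (k' - j)) * char_fun \<phi> a $ (k' - j))"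
        by (simp add: algebra_simps)
    qed
    also have "\<dots> = (\<Sum>j\<le>k'. (-1) ^ j * of_nat (falling_fact j k') * \<phi> (a * a ^ j)
                       * frob \<phi> (replicate (k' - j) a))"
      using less.IH Suc by (intro sum.cong refl) simp
    also have "\<dots> = frob \<phi> (replicate k a)"
      unfolding Suc replicate_Suc frob_Cons_replicate ..
    finally show ?thesis .
  qed
qed

lemma char_fun_coeff_eq_0_iff:
  fixes \<phi> :: "'a::{comm_ring_1,real_algebra_1} \<Rightarrow> 'b::{comm_ring_1,real_algebra_1}"
  assumes lin: "linear \<phi>"
  shows "char_fun \<phi> a $ k = 0 \<longleftrightarrow> frob \<phi> (replicate k a) = 0"
proof
  assume "char_fun \<phi> a $ k = 0"
  then show "frob \<phi> (replicate k a) = 0" using char_fun_coeff_frob[OF lin, of k a] by simp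
next
  assume "frob \<phi> (replicate k a) = 0"
  then have "of_nat (fact k) * char_fun \<phi> a $ k = 0" using char_fun_coeff_frob[OF lin, of k a] by simp
  then show "char_fun \<phi> a $ k = 0" by (rule of_nat_mult_eq_0_cancel) simp
qed

lemma fps_eq_poly_if_coeffs_vanish:
  fixes f :: "'b::comm_ring_1 fps"
  assumes "\<And>k. k > n \<Longrightarrow> f $ k = 0"
  shows "\<exists>p. f = fps_of_poly p \<and> degree p \<le> n"
proof (intro exI conjI)
  show "f = fps_of_poly (truncate_fps (Suc n) f)"
    by (rule fps_ext) (simp add: coeff_truncate_fps assms)
  show "degree (truncate_fps (Suc n) f) \<le> n"
    using degree_truncate_fps[of "Suc n" f] by simp
qed

(* Polynomiality of all characteristic functions of degree <= n is equivalent to the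
   vanishing of all Frobenius maps of arity > n: combine bridge (1) with polarization. *)
lemma char_fun_poly_iff_frob_vanish:
  fixes \<phi> :: "'a::{comm_ring_1,real_algebra_1} \<Rightarrow> 'b::{comm_ring_1,real_algebra_1}"
  assumes lin: "linear \<phi>"
  shows "(\<forall>a. \<exists>p. char_fun \<phi> a = fps_of_poly p \<and> degree p \<le> n)
     \<longleftrightarrow> (\<forall>xs. length xs \<ge> n + 1 \<longrightarrow> frob \<phi> xs = 0)"
proof
  assume poly: "\<forall>a. \<exists>p. char_fun \<phi> a = fps_of_poly p \<and> degree p \<le> n"
  have coeff_vanish: "char_fun \<phi> a $ k = 0" if "k > n" for a k
  proof -
    obtain p where "char_fun \<phi> a = fps_of_poly p" and "degree p \<le> n" using poly by blast
    then show ?thesis using that by (simp add: coeff_eq_0)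
  qed
  show "\<forall>xs. length xs \<ge> n + 1 \<longrightarrow> frob \<phi> xs = 0"
  proof (intro allI impI)
    fix xs :: "'a list" assume len: "length xs \<ge> n + 1"
    have "frob \<phi> (replicate (length xs) x) = 0" for x
      using coeff_vanish[of "length xs" x] len char_fun_coeff_eq_0_iff[OF lin] by simp
    then show "frob \<phi> xs = 0" by (rule frob_polarization[OF lin _ refl])
  qed
next
  assume vanish: "\<forall>xs. length xs \<ge> n + 1 \<longrightarrow> frob \<phi> xs = 0"
  show "\<forall>a. \<exists>p. char_fun \<phi> a = fps_of_poly p \<and> degree p \<le> n"
  proof
    fix a
    show "\<exists>p. char_fun \<phi> a = fps_of_poly p \<and> degree p \<le> n"
      by (rule fps_eq_poly_if_coeffs_vanish) (simp add: char_fun_coeff_eq_0_iff[OF lin] vanish)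
  qed
qed


section \<open>The value phi(1)\<close>

(* If all Frobenius maps of arity > n vanish and B is connected, phi(1) is an integer
   in {0..n}: the product prod_(i<=n) (phi(1) - i) = Phi_(n+1)(1,...,1) is zero. *)
lemma phi_one_small_nat:
  assumes conn: "connected_alg TYPE('b::comm_ring_1)"
    and vanish: "\<forall>xs. length xs \<ge> n + 1 \<longrightarrow> frob (\<phi> :: 'a::comm_ring_1 \<Rightarrow> 'b) xs = 0"
  shows "\<exists>j\<le>n. \<phi> 1 = of_nat j"
proof -
  have "(\<Prod>i\<le>n. \<phi> 1 - of_nat i) = 0"
    using vanish frob_replicate_one[of \<phi> "Suc n"] by (simp add: lessThan_Suc_atMost del: frob.simps)
  then show ?thesis using conn unfolding connected_alg_def by blast
qed

(* (phi(1) - n) psi_n(a) = Phi_(n+1)(1,a,...,a)/n!, which vanishes when Phi_(n+1) does. *)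
lemma phi_one_annihilates_top_coeff:
  fixes \<phi> :: "'a::{comm_ring_1,real_algebra_1} \<Rightarrow> 'b::{comm_ring_1,real_algebra_1}"
  assumes lin: "linear \<phi>" and vanish: "\<forall>xs. length xs \<ge> n + 1 \<longrightarrow> frob \<phi> xs = 0"
  shows "(\<phi> 1 - of_nat n) * char_fun \<phi> a $ n = 0"
proof -
  have "of_nat (fact n) * ((\<phi> 1 - of_nat n) * char_fun \<phi> a $ n) = frob \<phi> (1 # replicate n a)"
    by (simp add: frob_one_Cons char_fun_coeff_frob[OF lin, symmetric] algebra_simps del: frob.simps)
  also have "\<dots> = 0" using vanish by simp
  finally show ?thesis by (rule of_nat_mult_eq_0_cancel) simp
qed

(* If phi(1) = n then psi_n(1) = binomial(n, n) = 1. *)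
lemma char_fun_one_coeff:
  fixes \<phi> :: "'a::{comm_ring_1,real_algebra_1} \<Rightarrow> 'b::{comm_ring_1,real_algebra_1}"
  assumes lin: "linear \<phi>" and one: "\<phi> 1 = of_nat n"
  shows "char_fun \<phi> 1 $ n = 1"
proof -
  have "of_nat (fact n) * char_fun \<phi> 1 $ n = frob \<phi> (replicate n 1)"
    by (rule char_fun_coeff_frob[OF lin])
  also have "\<dots> = of_nat (\<Prod>i<n. n - i)"
    unfolding frob_replicate_one one by simp
  also have "\<dots> = of_nat (fact n)"
    by (simp add: fact_prod_rev atLeast0LessThan)
  finally have "of_nat (fact n) * (char_fun \<phi> 1 $ n - 1) = 0" by (simp add: algebra_simps)
  then have "char_fun \<phi> 1 $ n - 1 = 0" by (rule of_nat_mult_eq_0_cancel) simp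
  then show ?thesis by simp
qed


theorem mainTheorem4:
  fixes \<phi> :: "'a::{comm_ring_1,real_algebra_1} \<Rightarrow> 'b::{comm_ring_1,real_algebra_1}"
    and n :: nat
  assumes "connected_alg TYPE('b)"
    and "n \<ge> 1"
    and "linear \<phi>"
  shows "((\<forall>a. \<exists>p. char_fun \<phi> a = fps_of_poly p \<and> degree p \<le> n) \<and>
          (\<exists>a p. char_fun \<phi> a = fps_of_poly p \<and> degree p = n))
         \<longleftrightarrow> frobenius_hom n \<phi>"
proof
  assume H: "(\<forall>a. \<exists>p. char_fun \<phi> a = fps_of_poly p \<and> degree p \<le> n) \<and>
          (\<exists>a p. char_fun \<phi> a = fps_of_poly p \<and> degree p = n)"
  then have vanish: "\<forall>xs. length xs \<ge> n + 1 \<longrightarrow> frob \<phi> xs = 0"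
    using char_fun_poly_iff_frob_vanish[OF assms(3)] by blast
  obtain j where j: "\<phi> 1 = of_nat j"
    using phi_one_small_nat[OF assms(1) vanish] by blast
  obtain a p where p: "char_fun \<phi> a = fps_of_poly p" "degree p = n" using H by blast
  then have "char_fun \<phi> a $ n \<noteq> 0" using assms(2) by auto
  moreover have "of_real (real j - real n) * char_fun \<phi> a $ n = 0"
    using phi_one_annihilates_top_coeff[OF assms(3) vanish, of a] j by simp
  ultimately have "j = n" using of_real_mult_eq_0_cancel by fastforce
  then show "frobenius_hom n \<phi>" unfolding frobenius_hom_def using j vanish by simp
next
  assume "frobenius_hom n \<phi>"
  then have one: "\<phi> 1 = of_nat n" and vanish: "\<forall>xs. length xs \<ge> n + 1 \<longrightarrow> frob \<phi> xs = 0"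
    unfolding frobenius_hom_def by auto
  then have poly: "\<forall>a. \<exists>p. char_fun \<phi> a = fps_of_poly p \<and> degree p \<le> n"
    using char_fun_poly_iff_frob_vanish[OF assms(3)] by blast
  then obtain p where p: "char_fun \<phi> 1 = fps_of_poly p" "degree p \<le> n" by blast
  have "coeff p n \<noteq> 0" using char_fun_one_coeff[OF assms(3) one] p(1) by simp
  then have "degree p = n" using p(2) le_degree by (metis le_antisym)
  then show "(\<forall>a. \<exists>p. char_fun \<phi> a = fps_of_poly p \<and> degree p \<le> n) \<and>
          (\<exists>a p. char_fun \<phi> a = fps_of_poly p \<and> degree p = n)"
    using poly p(1) by blast
qed

end
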